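(* Let $G$ be a 5-vertex-critical $(P_5,\text{chair})$-free graph and let $C=v_1v_2v_3v_4v_5v_1$ be an induced $C_5$ in $G$. Then $S_0=\varnothing$, i.e. every vertex of $V(G)\setminus V(C)$ has a neighbor in $V(C)$.
   Context: All graphs are finite and simple; $P_5$ is the path on 5 vertices; the chair is a $P_4$ plus a vertex adjacent to exactly one of the two middle vertices of the $P_4$; "$H$-free" means no induced subgraph isomorphic to $H$. A graph $G$ is $k$-vertex-critical if $\chi(G)=k$ and $\chi(G-v)<k$ for every $v\in V(G)$. $S_0=\{v\in V(G)\setminus V(C): N(v)\cap V(C)=\varnothing\}$. *)

theory Defs
  imports Main
begin

definition sgraph :: "'a set \<Rightarrow> 'a set set \<Rightarrow> bool" where
  "sgraph V E \<longleftrightarrow> finite V \<and> (\<forall>e\<in>E. \<exists>x y. x \<in> V \<and> y \<in> V \<and> x \<noteq> y \<and> e = {x, y})"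

definition adj :: "'a set set \<Rightarrow> 'a \<Rightarrow> 'a \<Rightarrow> bool" where
  "adj E x y \<longleftrightarrow> {x, y} \<in> E"

definition induced_edges :: "'a set set \<Rightarrow> 'a set \<Rightarrow> 'a set set" where
  "induced_edges E S = {e \<in> E. e \<subseteq> S}"

definition colorable :: "'a set \<Rightarrow> 'a set set \<Rightarrow> nat \<Rightarrow> bool" where
  "colorable V E k \<longleftrightarrow> (\<exists>f :: 'a \<Rightarrow> nat. (\<forall>v\<in>V. f v < k) \<and>
      (\<forall>x\<in>V. \<forall>y\<in>V. adj E x y \<longrightarrow> f x \<noteq> f y))"

definition chromatic_number :: "'a set \<Rightarrow> 'a set set \<Rightarrow> nat" where
  "chromatic_number V E = (LEAST k. colorable V E k)"

definition vertex_critical :: "'a set \<Rightarrow> 'a set set \<Rightarrow> nat \<Rightarrow> bool" where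
  "vertex_critical V E k \<longleftrightarrow> chromatic_number V E = k \<and>
     (\<forall>v\<in>V. chromatic_number (V - {v}) (induced_edges E (V - {v})) < k)"

definition contains_induced :: "'b set \<Rightarrow> 'b set set \<Rightarrow> 'a set \<Rightarrow> 'a set set \<Rightarrow> bool" where
  "contains_induced VH EH V E \<longleftrightarrow> (\<exists>f. inj_on f VH \<and> f ` VH \<subseteq> V \<and>
      (\<forall>x\<in>VH. \<forall>y\<in>VH. adj EH x y \<longleftrightarrow> adj E (f x) (f y)))"

definition H_free :: "'b set \<Rightarrow> 'b set set \<Rightarrow> 'a set \<Rightarrow> 'a set set \<Rightarrow> bool" where
  "H_free VH EH V E \<longleftrightarrow> \<not> contains_induced VH EH V E"

definition P5_V :: "nat set" where "P5_V = {0,1,2,3,4}"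
definition P5_E :: "nat set set" where "P5_E = {{0,1},{1,2},{2,3},{3,4}}"

definition chair_V :: "nat set" where "chair_V = {0,1,2,3,4}"
definition chair_E :: "nat set set" where "chair_E = {{0,1},{1,2},{2,3},{1,4}}"

end

theory Submission
  imports Defs "HOL-Combinatorics.Transposition"
begin

text \<open>Suppose some vertex x has no neighbor on C, and let K be the component of x in G[S0].
  By P5- and chair-freeness, every vertex outside K with a neighbor in K is complete to both
  C and K. Take 4-colorings of G - x and of G - v1. In the first, all these boundary vertices
  avoid the colors of C, which uses at least three colors; so the boundary is monochromatic.
  In the second, K avoids the color of any boundary vertex, so after transposing two colors it
  avoids the boundary color of the first. Gluing the two colorings 4-colors G.\<close>

lemma adj_sym: "adj E a b \<longleftrightarrow> adj E b a"
  by (simp add: adj_def insert_commute)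

lemma adj_symD: "adj E a b \<Longrightarrow> adj E b a"
  by (simp add: adj_sym)

lemma sgraph_adjD:
  assumes "sgraph V E" "adj E a b"
  shows "a \<in> V" "b \<in> V" "a \<noteq> b"
  using assms unfolding sgraph_def adj_def by (metis doubleton_eq_iff)+

lemma adj_induced_edges: "a \<in> S \<Longrightarrow> b \<in> S \<Longrightarrow> adj (induced_edges E S) a b \<longleftrightarrow> adj E a b"
  by (auto simp: adj_def induced_edges_def)

lemma sgraph_induced:
  assumes "sgraph V E" "S \<subseteq> V"
  shows "sgraph S (induced_edges E S)"
  using assms finite_subset unfolding sgraph_def induced_edges_def by fastforce

lemma no_induced_P5:
  assumes "sgraph V E" "H_free P5_V P5_E V E"
    and "{a, b, c, d, e} \<subseteq> V" "distinct [a, b, c, d, e]"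
    and "adj E a b" "adj E b c" "adj E c d" "adj E d e"
    and "\<not> adj E a c" "\<not> adj E a d" "\<not> adj E a e" "\<not> adj E b d" "\<not> adj E b e" "\<not> adj E c e"
  shows False
proof -
  let ?f = "\<lambda>i::nat. if i = 0 then a else if i = 1 then b else if i = 2 then c else if i = 3 then d else e"
  have "\<not> adj E z z" for z
    using sgraph_adjD(3)[OF assms(1)] by blast
  then have "contains_induced P5_V P5_E V E"
    unfolding contains_induced_def
    by (intro exI[of _ ?f])
      (use assms in \<open>auto simp: P5_V_def P5_E_def adj_def inj_on_def doubleton_eq_iff insert_commute\<close>)
  with assms(2) show False
    by (simp add: H_free_def)
qed

lemma no_induced_chair:
  assumes "sgraph V E" "H_free chair_V chair_E V E"
    and "{a, b, c, d, e} \<subseteq> V" "distinct [a, b, c, d, e]"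
    and "adj E a b" "adj E b c" "adj E c d" "adj E b e"
    and "\<not> adj E a c" "\<not> adj E a d" "\<not> adj E a e" "\<not> adj E b d" "\<not> adj E c e" "\<not> adj E d e"
  shows False
proof -
  let ?f = "\<lambda>i::nat. if i = 0 then a else if i = 1 then b else if i = 2 then c else if i = 3 then d else e"
  have "\<not> adj E z z" for z
    using sgraph_adjD(3)[OF assms(1)] by blast
  then have "contains_induced chair_V chair_E V E"
    unfolding contains_induced_def
    by (intro exI[of _ ?f])
      (use assms in \<open>auto simp: chair_V_def chair_E_def adj_def inj_on_def doubleton_eq_iff insert_commute\<close>)
  with assms(2) show False
    by (simp add: H_free_def)
qed

definition induced_C5 :: "'a set \<Rightarrow> 'a set set \<Rightarrow> 'a \<Rightarrow> 'a \<Rightarrow> 'a \<Rightarrow> 'a \<Rightarrow> 'a \<Rightarrow> bool" where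
  "induced_C5 V E a b c d e \<longleftrightarrow> {a, b, c, d, e} \<subseteq> V \<and> distinct [a, b, c, d, e] \<and>
     adj E a b \<and> adj E b c \<and> adj E c d \<and> adj E d e \<and> adj E e a \<and>
     \<not> adj E a c \<and> \<not> adj E a d \<and> \<not> adj E b d \<and> \<not> adj E b e \<and> \<not> adj E c e"

lemma induced_C5_rotate: "induced_C5 V E a b c d e \<Longrightarrow> induced_C5 V E b c d e a"
  by (auto simp: induced_C5_def adj_sym)

lemma C5_neighbor_step:
  assumes G: "sgraph V E" and P5: "H_free P5_V P5_E V E" and chair: "H_free chair_V chair_E V E"
    and C: "induced_C5 V E w1 w2 w3 w4 w5"
    and k': "\<not> adj E k w1" "\<not> adj E k w2" "\<not> adj E k w3" "\<not> adj E k w4" "\<not> adj E k w5"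
    and ku: "adj E k u" and uw1: "adj E u w1"
  shows "adj E u w2"
proof (rule ccontr)
  assume uw2: "\<not> adj E u w2"
  have ku_in_V: "k \<in> V" "u \<in> V" "k \<noteq> u"
    using sgraph_adjD[OF G ku] by auto
  have cycle: "{w1, w2, w3, w4, w5} \<subseteq> V" "distinct [w1, w2, w3, w4, w5]"
    "adj E w1 w2" "adj E w2 w3" "adj E w3 w4" "adj E w4 w5" "adj E w5 w1"
    "\<not> adj E w1 w3" "\<not> adj E w1 w4" "\<not> adj E w2 w4" "\<not> adj E w2 w5" "\<not> adj E w3 w5"
    using C by (auto simp: induced_C5_def)
  have outside: "k \<notin> {w1, w2, w3, w4, w5}" "u \<notin> {w1, w2, w3, w4, w5}"
    using k' ku cycle by (auto simp: adj_sym)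
  consider "\<not> adj E u w3" | "adj E u w3" "adj E u w4" | "adj E u w3" "\<not> adj E u w4"
    by blast
  then show False
  proof cases
    case 1
    show False
      by (rule no_induced_P5[OF G P5, of k u w1 w2 w3]) (use 1 ku uw1 uw2 ku_in_V k' cycle outside in auto)
  next
    case 2
    show False
      by (rule no_induced_chair[OF G chair, of k u w1 w2 w4]) (use 2 ku uw1 uw2 ku_in_V k' cycle outside in auto)
  next
    case 3
    have swapped: "adj E w3 u" "adj E u k" "\<not> adj E w2 u" "\<not> adj E w2 k" "\<not> adj E w3 k" "\<not> adj E w4 k"
      using 3 ku uw2 k' by (simp_all add: adj_sym)
    show False
      by (rule no_induced_chair[OF G chair, of w2 w3 u k w4]) (use 3 swapped k' ku_in_V cycle outside in auto)
  qed
qed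

lemma C5_neighbor_complete:
  assumes G: "sgraph V E" and P5: "H_free P5_V P5_E V E" and chair: "H_free chair_V chair_E V E"
    and C: "induced_C5 V E w1 w2 w3 w4 w5"
    and k: "\<forall>w\<in>{w1, w2, w3, w4, w5}. \<not> adj E k w"
    and ku: "adj E k u" and u: "\<exists>w\<in>{w1, w2, w3, w4, w5}. adj E u w"
  shows "\<forall>w\<in>{w1, w2, w3, w4, w5}. adj E u w"
proof -
  note step = C5_neighbor_step[OF G P5 chair]
  have C2: "induced_C5 V E w2 w3 w4 w5 w1" by (rule induced_C5_rotate[OF C])
  have C3: "induced_C5 V E w3 w4 w5 w1 w2" by (rule induced_C5_rotate[OF C2])
  have C4: "induced_C5 V E w4 w5 w1 w2 w3" by (rule induced_C5_rotate[OF C3])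
  have C5: "induced_C5 V E w5 w1 w2 w3 w4" by (rule induced_C5_rotate[OF C4])
  have k': "\<not> adj E k w1" "\<not> adj E k w2" "\<not> adj E k w3" "\<not> adj E k w4" "\<not> adj E k w5"
    using k by auto
  have "adj E u w1 \<Longrightarrow> adj E u w2" "adj E u w2 \<Longrightarrow> adj E u w3" "adj E u w3 \<Longrightarrow> adj E u w4"
    "adj E u w4 \<Longrightarrow> adj E u w5" "adj E u w5 \<Longrightarrow> adj E u w1"
    using step[OF C k' ku] step[OF C2 k'(2-5,1) ku] step[OF C3 k'(3-5,1,2) ku]
      step[OF C4 k'(4,5,1-3) ku] step[OF C5 k'(5,1-4) ku] by auto
  with u show ?thesis
    by blast
qed

text \<open>This is where chair-freeness lets adjacency spread through the components of G[S0].\<close>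

lemma chair_free_neighbor_extends:
  assumes G: "sgraph V E" and chair: "H_free chair_V chair_E V E"
    and "c \<noteq> c'" "\<not> adj E c c'"
    and "adj E u c" "adj E u c'" "adj E u a" "adj E a b"
    and "\<not> adj E a c" "\<not> adj E a c'" "\<not> adj E b c" "\<not> adj E b c'"
  shows "adj E u b"
proof (rule ccontr)
  assume "\<not> adj E u b"
  moreover have "adj E c u" "\<not> adj E c a" "\<not> adj E c b" "c \<noteq> a" "c \<noteq> b" "u \<noteq> b" "a \<noteq> c'" "b \<noteq> c'"
    using assms by (metis adj_sym)+
  ultimately show False
    using no_induced_chair[OF G chair, of c u a b c'] assms sgraph_adjD[OF G]
    by auto
qed

definition component_in :: "'a set \<Rightarrow> 'a set set \<Rightarrow> 'a \<Rightarrow> 'a set" where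
  "component_in S E x = {z. (x, z) \<in> {(p, q). p \<in> S \<and> q \<in> S \<and> adj E p q}\<^sup>*}"

lemma self_in_component_in: "x \<in> component_in S E x"
  by (simp add: component_in_def)

lemma component_in_subset: "x \<in> S \<Longrightarrow> component_in S E x \<subseteq> S"
  unfolding component_in_def by (auto elim: rtrancl.cases)

lemma component_in_closed:
  assumes "x \<in> S" "p \<in> component_in S E x" "q \<in> S" "adj E p q"
  shows "q \<in> component_in S E x"
  using assms component_in_subset[OF assms(1)]
  unfolding component_in_def by (auto intro: rtrancl_into_rtrancl)

lemma component_in_propagate:
  assumes step: "\<And>p q. p \<in> S \<Longrightarrow> q \<in> S \<Longrightarrow> adj E p q \<Longrightarrow> P p \<Longrightarrow> P q"
    and "k \<in> component_in S E x" "z \<in> component_in S E x" "P k"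
  shows "P z"
proof -
  let ?R = "{(p, q). p \<in> S \<and> q \<in> S \<and> adj E p q}"
  have "sym (?R\<^sup>*)"
    by (rule sym_rtrancl) (auto simp: sym_def adj_sym)
  then have "(k, x) \<in> ?R\<^sup>*"
    using assms(2) by (auto simp: component_in_def dest: symD)
  then have "(k, z) \<in> ?R\<^sup>*"
    using assms(3) by (auto simp: component_in_def)
  then show "P z"
    by induct (use assms(4) step in auto)
qed

definition S0 :: "'a set \<Rightarrow> 'a set set \<Rightarrow> 'a set \<Rightarrow> 'a set" where
  "S0 V E C = {v \<in> V - C. \<forall>c\<in>C. \<not> adj E v c}"

lemma S0_component_boundary:
  assumes G: "sgraph V E" and P5: "H_free P5_V P5_E V E" and chair: "H_free chair_V chair_E V E"
    and C: "induced_C5 V E w1 w2 w3 w4 w5"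
    and W: "W = {w1, w2, w3, w4, w5}" and K: "K = component_in (S0 V E W) E x"
    and x: "x \<in> S0 V E W"
    and u: "u \<in> V - K" and k: "k \<in> K" "adj E u k"
  shows "(\<forall>w\<in>W. adj E u w) \<and> (\<forall>z\<in>K. adj E u z)"
proof -
  have kS0: "k \<in> S0 V E W"
    using component_in_subset[OF x] k K by blast
  have ku: "adj E k u"
    using k(2) by (simp add: adj_sym)
  have "u \<notin> S0 V E W"
    using component_in_closed[OF x, where p = k and q = u] k(1) ku u K by blast
  moreover have "u \<notin> W"
    using kS0 ku by (auto simp: S0_def)
  ultimately have "\<exists>w\<in>W. adj E u w"
    using u by (auto simp: S0_def)
  moreover have "\<forall>w\<in>W. \<not> adj E k w"
    using kS0 by (simp add: S0_def)
  ultimately have uW: "\<forall>w\<in>W. adj E u w"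
    using C5_neighbor_complete[OF G P5 chair C _ ku] unfolding W by blast
  have w13: "w1 \<noteq> w3" "\<not> adj E w1 w3"
    using C by (auto simp: induced_C5_def)
  have step: "adj E u q"
    if "p \<in> S0 V E W" "q \<in> S0 V E W" "adj E p q" "adj E u p" for p q
    by (rule chair_free_neighbor_extends[OF G chair w13]) (use that uW W in \<open>auto simp: S0_def\<close>)
  have "adj E u z" if "z \<in> K" for z
    by (rule component_in_propagate[where P = "adj E u" and k = k and x = x, OF step])
      (use k that K in simp_all)
  with uW show ?thesis
    by blast
qed

definition proper_coloring :: "'a set set \<Rightarrow> 'a set \<Rightarrow> nat \<Rightarrow> ('a \<Rightarrow> nat) \<Rightarrow> bool" where
  "proper_coloring E S k f \<longleftrightarrow> (\<forall>v\<in>S. f v < k) \<and> (\<forall>x\<in>S. \<forall>y\<in>S. adj E x y \<longrightarrow> f x \<noteq> f y)"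

lemma colorable_iff_proper_coloring: "colorable V E k \<longleftrightarrow> (\<exists>f. proper_coloring E V k f)"
  by (simp add: colorable_def proper_coloring_def)

lemma proper_coloring_subset: "proper_coloring E S k f \<Longrightarrow> T \<subseteq> S \<Longrightarrow> proper_coloring E T k f"
  by (auto simp: proper_coloring_def)

lemma proper_coloring_induced_edges:
  "proper_coloring (induced_edges E S) S k f \<longleftrightarrow> proper_coloring E S k f"
  by (simp add: proper_coloring_def adj_induced_edges)

lemma sgraph_colorable:
  assumes "sgraph V E"
  shows "\<exists>n. colorable V E n"
proof -
  have "finite V"
    using assms by (simp add: sgraph_def)
  then obtain f :: "'a \<Rightarrow> nat" and n where f: "f ` V = {i. i < n}" "inj_on f V"
    using finite_imp_inj_to_nat_seg by blast
  have "f v < n" if "v \<in> V" for v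
    using f(1) that by (metis imageI mem_Collect_eq)
  moreover have "f x \<noteq> f y" if "x \<in> V" "y \<in> V" "adj E x y" for x y
    using inj_onD[OF f(2) _ that(1,2)] sgraph_adjD(3)[OF assms that(3)] by blast
  ultimately show ?thesis
    unfolding colorable_iff_proper_coloring proper_coloring_def by blast
qed

lemma colorable_chromatic_number: "sgraph V E \<Longrightarrow> colorable V E (chromatic_number V E)"
  unfolding chromatic_number_def by (rule LeastI_ex) (rule sgraph_colorable)

lemma chromatic_number_le: "colorable V E k \<Longrightarrow> chromatic_number V E \<le> k"
  unfolding chromatic_number_def by (rule Least_le)

lemma colorable_mono: "colorable V E k \<Longrightarrow> k \<le> m \<Longrightarrow> colorable V E m"
  unfolding colorable_def using order_less_le_trans by blast

lemma vertex_critical_delete_coloring: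
  assumes "sgraph V E" "vertex_critical V E (Suc k)" "v \<in> V"
  shows "\<exists>f. proper_coloring E (V - {v}) k f"
proof -
  let ?V = "V - {v}" and ?E = "induced_edges E (V - {v})"
  have "colorable ?V ?E (chromatic_number ?V ?E)"
    by (rule colorable_chromatic_number) (use sgraph_induced assms(1) in blast)
  moreover have "chromatic_number ?V ?E \<le> k"
    using assms(2,3) by (auto simp: vertex_critical_def)
  ultimately have "colorable ?V ?E k"
    by (rule colorable_mono)
  then show ?thesis
    by (simp add: colorable_iff_proper_coloring proper_coloring_induced_edges)
qed

lemma proper_coloring_glue:
  assumes "proper_coloring E (V - K) k g" "proper_coloring E K k h"
    and "\<forall>z\<in>K. \<forall>w\<in>V - K. adj E z w \<longrightarrow> h z \<noteq> g w"
  shows "proper_coloring E V k (\<lambda>z. if z \<in> K then h z else g z)"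
  using assms unfolding proper_coloring_def by (auto, metis DiffI adj_sym)

lemma proper_coloring_avoid_color:
  assumes h: "proper_coloring E K k h" and "c < k" "d < k" and d: "\<forall>z\<in>K. h z \<noteq> d"
  shows "\<exists>h'. proper_coloring E K k h' \<and> (\<forall>z\<in>K. h' z \<noteq> c)"
proof (intro exI conjI)
  have "transpose d c i < k" if "i < k" for i
    using that assms(2,3) by (simp add: transpose_def)
  moreover have "transpose d c i \<noteq> transpose d c j" if "i \<noteq> j" for i j
    using transpose_eq_imp_eq that by metis
  ultimately show "proper_coloring E K k (transpose d c \<circ> h)"
    using h unfolding proper_coloring_def by simp
  show "\<forall>z\<in>K. (transpose d c \<circ> h) z \<noteq> c"
    using d by (auto simp: transpose_eq_iff)
qed

lemma colorable_by_recoloring_component: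
  assumes g: "proper_coloring E (V - {x}) k g" and h: "proper_coloring E (V - {v}) k h"
    and K: "K \<subseteq> V" "x \<in> K" "v \<notin> K" "\<forall>z\<in>K. \<not> adj E v z"
    and complete: "\<And>u z. u \<in> V - K \<Longrightarrow> z \<in> K \<Longrightarrow> adj E u z \<Longrightarrow> \<forall>z'\<in>K. adj E u z'"
    and monochromatic: "\<And>u w z z'. u \<in> V - K \<Longrightarrow> w \<in> V - K \<Longrightarrow> z \<in> K \<Longrightarrow> z' \<in> K \<Longrightarrow>
      adj E u z \<Longrightarrow> adj E w z' \<Longrightarrow> g u = g w"
  shows "colorable V E k"
proof -
  have gK: "proper_coloring E (V - K) k g"
    by (rule proper_coloring_subset[OF g]) (use K in blast)
  have hK: "proper_coloring E K k h"
    by (rule proper_coloring_subset[OF h]) (use K in blast)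
  obtain h' where h': "proper_coloring E K k h'" and cross: "\<forall>z\<in>K. \<forall>w\<in>V - K. adj E z w \<longrightarrow> h' z \<noteq> g w"
  proof (cases "\<exists>y\<in>V - K. \<exists>z\<in>K. adj E y z")
    case False
    then have "\<forall>z\<in>K. \<forall>w\<in>V - K. adj E z w \<longrightarrow> h z \<noteq> g w"
      by (metis adj_sym)
    then show ?thesis
      by (rule that[OF hK])
  next
    case True
    then obtain y z0 where y: "y \<in> V - K" "z0 \<in> K" "adj E y z0"
      by blast
    have "y \<in> V - {x}" "y \<in> V - {v}"
      using y K by auto
    then have colors: "g y < k" "h y < k"
      using g h by (auto simp: proper_coloring_def)
    have "h z \<noteq> h y" if "z \<in> K" for z
    proof -
      have "adj E z y"
        by (rule adj_symD) (use complete[OF y] that in blast)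
      moreover have "z \<in> V - {v}"
        using that K by blast
      ultimately show ?thesis
        using h \<open>y \<in> V - {v}\<close> unfolding proper_coloring_def by blast
    qed
    then obtain h' where h': "proper_coloring E K k h'" "\<forall>z\<in>K. h' z \<noteq> g y"
      using proper_coloring_avoid_color[OF hK colors] by blast
    have "h' z \<noteq> g w" if "z \<in> K" "w \<in> V - K" "adj E z w" for z w
    proof -
      have "g w = g y"
        using adj_symD[OF that(3)]
        by (rule monochromatic[OF that(2) y(1) that(1) y(2) _ y(3)])
      then show ?thesis
        using h'(2) that(1) by simp
    qed
    then show ?thesis
      using that[OF h'(1)] by blast
  qed
  show ?thesis
    using proper_coloring_glue[OF gK h' cross] by (auto simp: colorable_iff_proper_coloring)
qed

text \<open>A 5-cycle needs three colors, so at most one of four colors is missing from it.\<close>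

lemma C5_coloring_missing_color_unique:
  fixes a1 a2 a3 a4 a5 b c :: nat
  assumes "a1 < 4" "a2 < 4" "a3 < 4" "a4 < 4" "a5 < 4" "b < 4" "c < 4"
    and "a1 \<noteq> a2" "a2 \<noteq> a3" "a3 \<noteq> a4" "a4 \<noteq> a5" "a5 \<noteq> a1"
    and "b \<notin> {a1, a2, a3, a4, a5}" "c \<notin> {a1, a2, a3, a4, a5}"
  shows "b = c"
  using assms by (simp add: less_Suc_eq numeral_eq_Suc; presburger)

lemma C5_complete_same_color:
  assumes g: "proper_coloring E S 4 g" and C: "induced_C5 V E w1 w2 w3 w4 w5"
    and W: "{w1, w2, w3, w4, w5} \<subseteq> S" and uw: "u \<in> S" "w \<in> S"
    and "\<forall>c\<in>{w1, w2, w3, w4, w5}. adj E u c" "\<forall>c\<in>{w1, w2, w3, w4, w5}. adj E w c"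
  shows "g u = g w"
proof -
  have in_S: "w1 \<in> S" "w2 \<in> S" "w3 \<in> S" "w4 \<in> S" "w5 \<in> S"
    using W by simp_all
  have proper: "g a \<noteq> g b" if "a \<in> S" "b \<in> S" "adj E a b" for a b
    using g that unfolding proper_coloring_def by blast
  have "g v < 4" if "v \<in> S" for v
    using g that unfolding proper_coloring_def by blast
  then have "g w1 < 4" "g w2 < 4" "g w3 < 4" "g w4 < 4" "g w5 < 4" "g u < 4" "g w < 4"
    using in_S uw by blast+
  moreover have "g w1 \<noteq> g w2" "g w2 \<noteq> g w3" "g w3 \<noteq> g w4" "g w4 \<noteq> g w5" "g w5 \<noteq> g w1"
    using C in_S by (simp_all add: proper induced_C5_def)
  moreover have "g u \<notin> {g w1, g w2, g w3, g w4, g w5}" "g w \<notin> {g w1, g w2, g w3, g w4, g w5}"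
    using assms(6,7) in_S uw by (simp_all add: proper)
  ultimately show ?thesis
    by (rule C5_coloring_missing_color_unique)
qed

theorem mainTheorem4:
  fixes V :: "'a set" and E :: "'a set set" and v1 v2 v3 v4 v5 :: 'a
  assumes "sgraph V E"
    and "vertex_critical V E 5"
    and "H_free P5_V P5_E V E"
    and "H_free chair_V chair_E V E"
    and "v1 \<in> V" "v2 \<in> V" "v3 \<in> V" "v4 \<in> V" "v5 \<in> V"
    and "distinct [v1, v2, v3, v4, v5]"
    and "adj E v1 v2" "adj E v2 v3" "adj E v3 v4" "adj E v4 v5" "adj E v5 v1"
    and "\<not> adj E v1 v3" "\<not> adj E v1 v4" "\<not> adj E v2 v4" "\<not> adj E v2 v5" "\<not> adj E v3 v5"
  shows "{v \<in> V - {v1, v2, v3, v4, v5}. \<forall>c\<in>{v1, v2, v3, v4, v5}. \<not> adj E v c} = {}"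
proof (rule ccontr)
  let ?W = "{v1, v2, v3, v4, v5}"
  assume "{v \<in> V - ?W. \<forall>c\<in>?W. \<not> adj E v c} \<noteq> {}"
  then obtain x where x: "x \<in> S0 V E ?W"
    by (auto simp: S0_def)
  define K where "K = component_in (S0 V E ?W) E x"
  have C: "induced_C5 V E v1 v2 v3 v4 v5"
    using assms(5-20) by (simp add: induced_C5_def)
  have K_S0: "K \<subseteq> S0 V E ?W" and x_K: "x \<in> K"
    unfolding K_def by (rule component_in_subset[OF x], rule self_in_component_in)
  have crit: "vertex_critical V E (Suc 4)"
    using assms(2) by simp
  obtain g where g: "proper_coloring E (V - {x}) 4 g"
    using vertex_critical_delete_coloring[OF assms(1) crit] x by (auto simp: S0_def)
  obtain h where h: "proper_coloring E (V - {v1}) 4 h"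
    using vertex_critical_delete_coloring[OF assms(1) crit assms(5)] by blast
  note boundary = S0_component_boundary[OF assms(1,3,4) C refl K_def x]
  have "colorable V E 4"
  proof (rule colorable_by_recoloring_component[OF g h])
    show "K \<subseteq> V" "x \<in> K" "v1 \<notin> K" "\<forall>z\<in>K. \<not> adj E v1 z"
      using K_S0 x_K by (auto simp: S0_def dest: adj_symD)
    show "\<forall>z'\<in>K. adj E u z'" if "u \<in> V - K" "z \<in> K" "adj E u z" for u z
      using boundary[OF that] by blast
    show "g u = g w" if "u \<in> V - K" "w \<in> V - K" "z \<in> K" "z' \<in> K" "adj E u z" "adj E w z'"
      for u w z z'
      by (rule C5_complete_same_color[OF g C])
        (use boundary[OF that(1,3,5)] boundary[OF that(2,4,6)] x x_K that assms(5-9) in \<open>auto simp: S0_def\<close>)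
  qed
  then have "chromatic_number V E \<le> 4"
    by (rule chromatic_number_le)
  with assms(2) show False
    by (simp add: vertex_critical_def)
qed

end
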